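(* In the two-player zero-sum setting and algorithm SBMM described in the context, for every $h\in[H]$, $s\in\mathcal{S}$ and any fixed vectors $\underline{V}_{h+1},\overline{V}_{h+1}\in\mathbb{R}^{\mathcal{S}}$, the function $(\mu,\nu)\mapsto\underline{V}_h^{\mu,\nu}(s)$ on $\Delta(\mathcal{A})\times\Delta(\mathcal{B})$ is concave in $\mu$ for each fixed $\nu$ and concave in $\nu$ for each fixed $\mu$, and the function $(\mu,\nu)\mapsto\overline{V}_h^{\mu,\nu}(s)$ is convex in $\mu$ for each fixed $\nu$ and convex in $\nu$ for each fixed $\mu$.
   Context: Two-player zero-sum episodic Markov game: finite state space $\mathcal{S}$ ($|\mathcal{S}|=S$), max-player actions $\mathcal{A}$ ($|\mathcal{A}|=A$), min-player actions $\mathcal{B}$ ($|\mathcal{B}|=B$), horizon $H$. Offline dataset $\mathcal{D}=\{(s_h^k,a_h^k,b_h^k,r_h^k,s_{h+1}^k)\}_{h\in[H],k\in[n]}$. Let $n_h(s,a,b)=\#\{k:(s_h^k,a_h^k,b_h^k)=(s,a,b)\}$, $\mathcal{K}_h(s)=\{(a,b):n_h(s,a,b)\neq0\}$; for $n_h(s,a,b)>0$, $\widehat{r}_h(s,a,b)$ is the average of $r_h^k$ and $\widehat{P}_h(s'|s,a,b)$ the empirical frequency of $s_{h+1}^k=s'$ over those $k$; otherwise both are $0$. $\mathcal{N}(\Pi)>0$ is a fixed number (a covering number of a strategy class) and $\iota=32\log(2ABSHn/\delta)$. The bonus is $b_h(s,\mu,\nu)=H\sqrt{\sum_{(a,b)\in\mathcal{K}_h(s)}\frac{\mu(a)^2\nu(b)^2}{n_h(s,a,b)}\log(\mathcal{N}(\Pi))\iota}+\sqrt{\iota}/n$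 for $\mu\in\Delta(\mathcal{A}),\nu\in\Delta(\mathcal{B})$. Define $\underline{Q}_h(s,a,b)=\widehat{r}_h(s,a,b)+\sum_{s'}\widehat{P}_h(s'|s,a,b)\underline{V}_{h+1}(s')$, $\underline{V}_h^{\mu,\nu}(s)=\sum_{a,b}\mu(a)\nu(b)\underline{Q}_h(s,a,b)-b_h(s,\mu,\nu)$, $\overline{Q}_h(s,a,b)=\widehat{r}_h(s,a,b)+\sum_{s'}\widehat{P}_h(s'|s,a,b)\overline{V}_{h+1}(s')+H\mathbf{1}\{(a,b)\notin\mathcal{K}_h(s)\}$, $\overline{V}_h^{\mu,\nu}(s)=\sum_{a,b}\mu(a)\nu(b)\overline{Q}_h(s,a,b)+b_h(s,\mu,\nu)$. *)

theory Defs
  imports "HOL-Analysis.Analysis"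
begin

(* Offline dataset: D k h = (s_h^k, a_h^k, b_h^k, r_h^k, s_{h+1}^k), for k < n (episodes)
   and h in {1..H}. States, max-actions, min-actions are finite types. *)
type_synonym ('s,'a,'b) dataset = "nat \<Rightarrow> nat \<Rightarrow> ('s \<times> 'a \<times> 'b \<times> real \<times> 's)"

definition dstate :: "('s \<times> 'a \<times> 'b \<times> real \<times> 's) \<Rightarrow> 's" where "dstate t = fst t"
definition dact :: "('s \<times> 'a \<times> 'b \<times> real \<times> 's) \<Rightarrow> 'a" where "dact t = fst (snd t)"
definition dbct :: "('s \<times> 'a \<times> 'b \<times> real \<times> 's) \<Rightarrow> 'b" where "dbct t = fst (snd (snd t))"
definition drew :: "('s \<times> 'a \<times> 'b \<times> real \<times> 's) \<Rightarrow> real" where "drew t = fst (snd (snd (snd t)))"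
definition dnext :: "('s \<times> 'a \<times> 'b \<times> real \<times> 's) \<Rightarrow> 's" where "dnext t = snd (snd (snd (snd t)))"

definition visits :: "('s,'a,'b) dataset \<Rightarrow> nat \<Rightarrow> nat \<Rightarrow> 's \<Rightarrow> 'a \<Rightarrow> 'b \<Rightarrow> nat set" where
  "visits D n h s a b = {k \<in> {..<n}. dstate (D k h) = s \<and> dact (D k h) = a \<and> dbct (D k h) = b}"

definition cnt :: "('s,'a,'b) dataset \<Rightarrow> nat \<Rightarrow> nat \<Rightarrow> 's \<Rightarrow> 'a \<Rightarrow> 'b \<Rightarrow> nat" where
  "cnt D n h s a b = card (visits D n h s a b)"

definition Kset :: "('s,'a,'b) dataset \<Rightarrow> nat \<Rightarrow> nat \<Rightarrow> 's \<Rightarrow> ('a \<times> 'b) set" where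
  "Kset D n h s = {(a,b). cnt D n h s a b \<noteq> 0}"

definition rhat :: "('s,'a,'b) dataset \<Rightarrow> nat \<Rightarrow> nat \<Rightarrow> 's \<Rightarrow> 'a \<Rightarrow> 'b \<Rightarrow> real" where
  "rhat D n h s a b = (if cnt D n h s a b = 0 then 0
     else (\<Sum>k\<in>visits D n h s a b. drew (D k h)) / real (cnt D n h s a b))"

definition Phat :: "('s,'a,'b) dataset \<Rightarrow> nat \<Rightarrow> nat \<Rightarrow> 's \<Rightarrow> 'a \<Rightarrow> 'b \<Rightarrow> 's \<Rightarrow> real" where
  "Phat D n h s a b s' = (if cnt D n h s a b = 0 then 0
     else real (card {k \<in> visits D n h s a b. dnext (D k h) = s'}) / real (cnt D n h s a b))"

definition iota :: "'s itself \<Rightarrow> 'a itself \<Rightarrow> 'b itself \<Rightarrow> nat \<Rightarrow> nat \<Rightarrow> real \<Rightarrow> real" where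
  "iota _ _ _ H n \<delta> = 32 * ln (2 * real CARD('a) * real CARD('b) * real CARD('s) * real H * real n / \<delta>)"

(* bonus b_h(s,mu,nu); NPi is the covering number N(Pi) *)
definition bonus :: "('s::finite,'a::finite,'b::finite) dataset \<Rightarrow> nat \<Rightarrow> nat \<Rightarrow> real \<Rightarrow> nat \<Rightarrow> nat \<Rightarrow> 's
     \<Rightarrow> real^'a \<Rightarrow> real^'b \<Rightarrow> real" where
  "bonus D n H \<delta> NPi h s \<mu> \<nu> =
     (let \<iota> = iota TYPE('s) TYPE('a) TYPE('b) H n \<delta> in
      real H * sqrt ((\<Sum>(a,b)\<in>Kset D n h s. (\<mu>$a)^2 * (\<nu>$b)^2 / real (cnt D n h s a b))
                      * ln (real NPi) * \<iota>) + sqrt \<iota> / real n)"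

definition Qlow :: "('s::finite,'a,'b) dataset \<Rightarrow> nat \<Rightarrow> nat \<Rightarrow> ('s \<Rightarrow> real) \<Rightarrow> 's \<Rightarrow> 'a \<Rightarrow> 'b \<Rightarrow> real" where
  "Qlow D n h Vnext s a b = rhat D n h s a b + (\<Sum>s'\<in>UNIV. Phat D n h s a b s' * Vnext s')"

definition Qup :: "('s::finite,'a,'b) dataset \<Rightarrow> nat \<Rightarrow> nat \<Rightarrow> nat \<Rightarrow> ('s \<Rightarrow> real) \<Rightarrow> 's \<Rightarrow> 'a \<Rightarrow> 'b \<Rightarrow> real" where
  "Qup D n H h Vnext s a b = rhat D n h s a b + (\<Sum>s'\<in>UNIV. Phat D n h s a b s' * Vnext s')
      + real H * (if (a,b) \<notin> Kset D n h s then 1 else 0)"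

definition Vlow :: "('s::finite,'a::finite,'b::finite) dataset \<Rightarrow> nat \<Rightarrow> nat \<Rightarrow> real \<Rightarrow> nat \<Rightarrow> nat
     \<Rightarrow> ('s \<Rightarrow> real) \<Rightarrow> 's \<Rightarrow> real^'a \<Rightarrow> real^'b \<Rightarrow> real" where
  "Vlow D n H \<delta> NPi h Vnext s \<mu> \<nu> =
     (\<Sum>a\<in>UNIV. \<Sum>b\<in>UNIV. \<mu>$a * \<nu>$b * Qlow D n h Vnext s a b) - bonus D n H \<delta> NPi h s \<mu> \<nu>"

definition Vup :: "('s::finite,'a::finite,'b::finite) dataset \<Rightarrow> nat \<Rightarrow> nat \<Rightarrow> real \<Rightarrow> nat \<Rightarrow> nat
     \<Rightarrow> ('s \<Rightarrow> real) \<Rightarrow> 's \<Rightarrow> real^'a \<Rightarrow> real^'b \<Rightarrow> real" where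
  "Vup D n H \<delta> NPi h Vnext s \<mu> \<nu> =
     (\<Sum>a\<in>UNIV. \<Sum>b\<in>UNIV. \<mu>$a * \<nu>$b * Qup D n H h Vnext s a b) + bonus D n H \<delta> NPi h s \<mu> \<nu>"

definition prob_simplex :: "(real^'a::finite) set" where
  "prob_simplex = {p. (\<forall>i. 0 \<le> p$i) \<and> (\<Sum>i\<in>UNIV. p$i) = 1}"

end

theory Submission
  imports Defs
begin

(* Both value functions are the bilinear payoff sum_{a,b} mu(a) nu(b) Q(a,b), linear in each
   strategy separately, minus resp. plus the bonus. Up to a constant, the bonus is H times the
   Euclidean norm of the vector (mu(a) nu(b) sqrt(log N(Pi) iota / n_h(s,a,b)))_{(a,b) in K_h(s)},
   whose entries are linear in mu for fixed nu and vice versa; such a norm is convex by the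
   triangle inequality. This needs log N(Pi) iota >= 0, which holds because N(Pi) >= 1 and the
   argument of the logarithm in iota is at least 1: Isabelle's sqrt is odd on negative reals,
   so a negative factor would turn the bonus concave. *)

lemma convex_on_linear:
  fixes f :: "'v::real_vector \<Rightarrow> real"
  assumes "linear f" and "convex S"
  shows "convex_on S f"
  using assms by (auto intro!: convex_onI simp: linear_add linear_scale)

lemma concave_on_linear:
  fixes f :: "'v::real_vector \<Rightarrow> real"
  assumes "linear f" and "convex S"
  shows "concave_on S f"
  unfolding concave_on_def using assms by (intro convex_on_linear linear_compose_neg)

lemma convex_on_L2_set_linear:
  fixes f :: "'k \<Rightarrow> 'v::real_vector \<Rightarrow> real"
  assumes lin: "\<And>k. linear (f k)" and "convex S"
  shows "convex_on S (\<lambda>x. L2_set (\<lambda>k. f k x) K)"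
proof (rule convex_onI[OF _ \<open>convex S\<close>])
  fix t :: real and x y :: 'v
  assume t: "0 < t" "t < 1"
  have "L2_set (\<lambda>k. f k ((1 - t) *\<^sub>R x + t *\<^sub>R y)) K
      = L2_set (\<lambda>k. (1 - t) * f k x + t * f k y) K"
    by (simp add: lin linear_add linear_scale)
  also have "\<dots> \<le> L2_set (\<lambda>k. (1 - t) * f k x) K + L2_set (\<lambda>k. t * f k y) K"
    by (rule L2_set_triangle_ineq)
  also have "\<dots> = (1 - t) * L2_set (\<lambda>k. f k x) K + t * L2_set (\<lambda>k. f k y) K"
    using t by (simp add: L2_set_right_distrib)
  finally show "L2_set (\<lambda>k. f k ((1 - t) *\<^sub>R x + t *\<^sub>R y)) K
      \<le> (1 - t) * L2_set (\<lambda>k. f k x) K + t * L2_set (\<lambda>k. f k y) K" .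
qed

lemma convex_prob_simplex: "convex (prob_simplex :: (real^'a::finite) set)"
  unfolding convex_def prob_simplex_def
  by (auto simp: sum.distrib sum_distrib_left[symmetric])

lemma iota_nonneg:
  assumes "0 < n" and "1 \<le> H" and "0 < \<delta>" and "\<delta> \<le> 1"
  shows "0 \<le> iota TYPE('s::finite) TYPE('a::finite) TYPE('b::finite) H n \<delta>"
proof -
  have "1 \<le> real CARD('a) * real CARD('b) * real CARD('s) * real H * real n"
    using assms by (intro mult_ge1_I) (simp_all add: Suc_le_eq)
  then have "1 \<le> 2 * real CARD('a) * real CARD('b) * real CARD('s) * real H * real n / \<delta>"
    using assms by (simp add: le_divide_eq)
  then show ?thesis
    unfolding iota_def by simp
qed

lemma linear_payoff_left:
  "linear (\<lambda>\<mu>::real^'a::finite. \<Sum>a\<in>UNIV. \<Sum>b\<in>UNIV. \<mu>$a * \<nu>$b * Q a b)"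
  by (auto intro!: linearI simp: sum.distrib sum_distrib_left algebra_simps)

lemma linear_payoff_right:
  "linear (\<lambda>\<nu>::real^'b::finite. \<Sum>a\<in>UNIV. \<Sum>b\<in>UNIV. \<mu>$a * \<nu>$b * Q a b)"
  by (auto intro!: linearI simp: sum.distrib sum_distrib_left algebra_simps)

lemma bonus_eq_L2_set:
  fixes D :: "('s::finite,'a::finite,'b::finite) dataset" and n H :: nat and \<delta> :: real
  defines "\<iota> \<equiv> iota TYPE('s) TYPE('a) TYPE('b) H n \<delta>"
  assumes "0 \<le> ln (real NPi) * \<iota>"
  shows "bonus D n H \<delta> NPi h s \<mu> \<nu> = real H * L2_set (\<lambda>(a, b). \<mu>$a * \<nu>$b
      * sqrt (ln (real NPi) * \<iota> / real (cnt D n h s a b))) (Kset D n h s) + sqrt \<iota> / real n"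
proof -
  have "(\<Sum>(a, b)\<in>K. (\<mu>$a)\<^sup>2 * (\<nu>$b)\<^sup>2 / real (cnt D n h s a b)) * ln (real NPi) * \<iota>
      = (\<Sum>k\<in>K. (case k of (a, b) \<Rightarrow>
          \<mu>$a * \<nu>$b * sqrt (ln (real NPi) * \<iota> / real (cnt D n h s a b)))\<^sup>2)" for K
    using assms(2) by (simp add: sum_distrib_right case_prod_beta power_mult_distrib mult.assoc)
  then show ?thesis
    unfolding bonus_def Let_def L2_set_def \<iota>_def[symmetric] by simp
qed

lemma convex_on_bonus_left:
  fixes D :: "('s::finite,'a::finite,'b::finite) dataset" and S :: "(real^'a) set"
  assumes "0 \<le> ln (real NPi) * iota TYPE('s) TYPE('a) TYPE('b) H n \<delta>" and "convex S"
  shows "convex_on S (\<lambda>\<mu>. bonus D n H \<delta> NPi h s \<mu> \<nu>)"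
  unfolding bonus_eq_L2_set[OF assms(1)] using \<open>convex S\<close>
  by (intro convex_on_add convex_on_cmul convex_on_L2_set_linear)
     (auto intro!: linearI simp: convex_on_const algebra_simps split: prod.split)

lemma convex_on_bonus_right:
  fixes D :: "('s::finite,'a::finite,'b::finite) dataset" and S :: "(real^'b) set"
  assumes "0 \<le> ln (real NPi) * iota TYPE('s) TYPE('a) TYPE('b) H n \<delta>" and "convex S"
  shows "convex_on S (\<lambda>\<nu>. bonus D n H \<delta> NPi h s \<mu> \<nu>)"
  unfolding bonus_eq_L2_set[OF assms(1)] using \<open>convex S\<close>
  by (intro convex_on_add convex_on_cmul convex_on_L2_set_linear)
     (auto intro!: linearI simp: convex_on_const algebra_simps split: prod.split)

theorem proposition2:
  fixes D :: "('s::finite,'a::finite,'b::finite) dataset"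
    and n H h NPi :: nat and \<delta> :: real
    and VlowNext VupNext :: "'s \<Rightarrow> real" and s :: 's
  assumes "0 < n" and "0 < NPi" and "0 < \<delta>" and "\<delta> < 1"
    and "1 \<le> h" and "h \<le> H"
  shows "(\<forall>\<nu>\<in>prob_simplex. concave_on prob_simplex (\<lambda>\<mu>. Vlow D n H \<delta> NPi h VlowNext s \<mu> \<nu>))
       \<and> (\<forall>\<mu>\<in>prob_simplex. concave_on prob_simplex (\<lambda>\<nu>. Vlow D n H \<delta> NPi h VlowNext s \<mu> \<nu>))
       \<and> (\<forall>\<nu>\<in>prob_simplex. convex_on prob_simplex (\<lambda>\<mu>. Vup D n H \<delta> NPi h VupNext s \<mu> \<nu>))
       \<and> (\<forall>\<mu>\<in>prob_simplex. convex_on prob_simplex (\<lambda>\<nu>. Vup D n H \<delta> NPi h VupNext s \<mu> \<nu>))"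
proof -
  have "0 \<le> ln (real NPi)"
    using \<open>0 < NPi\<close> by simp
  moreover have "0 \<le> iota TYPE('s) TYPE('a) TYPE('b) H n \<delta>"
    using assms by (intro iota_nonneg) auto
  ultimately have "0 \<le> ln (real NPi) * iota TYPE('s) TYPE('a) TYPE('b) H n \<delta>"
    by simp
  then show ?thesis
    unfolding Vlow_def Vup_def
    by (intro conjI ballI concave_on_diff convex_on_add concave_on_linear convex_on_linear
        linear_payoff_left linear_payoff_right convex_on_bonus_left convex_on_bonus_right
        convex_prob_simplex)
qed

end
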